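(* Let $k,n,m$ be positive integers with $1\le m\le kn$, and let $\mathcal{L}\subseteq\mathbb{R}^{n\times n}$ be a real linear subspace of dimension $r$ with ordered basis $\{S_1,\dots,S_r\}$. Let $P=[\mathrm{Vec}(S_1)\ \mathrm{Vec}(S_2)\ \cdots\ \mathrm{Vec}(S_r)]\in\mathbb{R}^{n^2\times r}$. Let $(E,X)\in\mathbb{R}^{m\times m}\times\mathbb{R}^{n\times m}$ be a real-form matrix eigenpair, i.e. $E=\mathrm{diag}(E_1,\dots,E_t,e_{2t+1},\dots,e_m)$ with $E_j=\begin{bmatrix}\alpha_j&\beta_j\\-\beta_j&\alpha_j\end{bmatrix}$ and $X=[u_1\ v_1\ \cdots\ u_t\ v_t\ \phi_{2t+1}\ \cdots\ \phi_m]$, as described in the context. Define $$U=\big[\,((XE^{k-1})^T\otimes I_n)P\ \ ((XE^{k-2})^T\otimes I_n)P\ \ \cdots\ \ (X^T\otimes I_n)P\,\big]\in\mathbb{R}^{mn\times kr},\qquad b=\mathrm{Vec}(-XE^k)\in\mathbb{R}^{mn}.$$ Then there exist matrices $A_0,A_1,\dots,A_{k-1}\in\mathcal{L}$ satisfying $$\sum_{i=0}^{k-1}A_iXE^i=-XE^k$$ (i.e. the monic matrix polynomial $\lambda^kI_n+\sum_{i=0}^{k-1}\lambda^iA_i$ has $(E,X)$ as a real matrix eigenpair) if and only if $UU^\dagger b=b$. In that case, the solutions are given by $$\mathrm{Vec}(A_i)=P\Big((e_{k-i}\otimes I_r)\big(U^\dagger b+(I_{kr}-U^\dagger U)y\big)\Big),\qquad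 i=0,1,\dots,k-1,$$ where $y\in\mathbb{R}^{kr}$ is an arbitrary vector. Moreover, the solution $(A_0,\dots,A_{k-1})$ is unique if and only if $UU^\dagger b=b$ and $U^\dagger U=I_{kr}$, in which case $$\mathrm{Vec}(A_i)=P\big((e_{k-i}\otimes I_r)U^\dagger b\big),\qquad i=0,1,\dots,k-1.$$
   Context: For a matrix $A\in\mathbb{R}^{n\times n}$, $\mathrm{Vec}(A)\in\mathbb{R}^{n^2}$ is the vector obtained by stacking the columns of $A$ on top of one another. $\otimes$ denotes the Kronecker product, $U^\dagger$ the Moore–Penrose pseudoinverse of $U$, $I_q$ the $q\times q$ identity matrix, and $e_j$ (for $1\le j\le k$) denotes the $j$-th row of $I_k$, so $e_{k-i}\otimes I_r\in\mathbb{R}^{r\times kr}$. Each $A\in\mathcal{L}$ is written uniquely as $A=\sum_{\ell=1}^r\alpha_\ell S_\ell$, so that $\mathrm{Vec}(A)=P[\alpha_1,\dots,\alpha_r]^T$. Real-form eigendata: given $m$ eigenvalues of which $t$ are complex conjugate pairs $\alpha_j\pm i\beta_j$ ($j=1,\dots,t$) with eigenvectors $u_j\pm iv_j$, and $m-2t$ are real eigenvalues $e_{2t+1},\dots,e_m$ with real eigenvectors $\phi_{2t+1},\dots,\phi_m\in\mathbb{R}^n$, the real-form matrix representations are $E$ and $X$ as in the claim. *)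

theory Defs
  imports "Jordan_Normal_Form.Matrix"
begin

definition vecm :: "real mat \<Rightarrow> real vec" where
  "vecm A = vec (dim_row A * dim_col A) (\<lambda>i. A $$ (i mod dim_row A, i div dim_row A))"

definition kron :: "real mat \<Rightarrow> real mat \<Rightarrow> real mat" where
  "kron A B = mat (dim_row A * dim_row B) (dim_col A * dim_col B)
     (\<lambda>(i,j). A $$ (i div dim_row B, j div dim_col B) * B $$ (i mod dim_row B, j mod dim_col B))"

definition is_pinv :: "real mat \<Rightarrow> real mat \<Rightarrow> bool" where
  "is_pinv U V \<longleftrightarrow> V \<in> carrier_mat (dim_col U) (dim_row U) \<and>
     U * V * U = U \<and> V * U * V = V \<and>
     (U * V)\<^sup>T = U * V \<and> (V * U)\<^sup>T = V * U"

definition pinv :: "real mat \<Rightarrow> real mat" where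
  "pinv U = (THE V. is_pinv U V)"

(* e_j, 1 <= j <= k: the j-th row of I_k, as a 1 x k matrix *)
definition unit_row :: "nat \<Rightarrow> nat \<Rightarrow> real mat" where
  "unit_row k j = mat 1 k (\<lambda>(_, c). if c = j - 1 then 1 else 0)"

definition lin_comb :: "nat \<Rightarrow> nat \<Rightarrow> (nat \<Rightarrow> real mat) \<Rightarrow> (nat \<Rightarrow> real) \<Rightarrow> real mat" where
  "lin_comb n r S c = mat n n (\<lambda>(i,j). \<Sum>l\<in>{1..r}. c l * S l $$ (i,j))"

definition span_L :: "nat \<Rightarrow> nat \<Rightarrow> (nat \<Rightarrow> real mat) \<Rightarrow> real mat set" where
  "span_L n r S = {lin_comb n r S c | c. True}"

definition is_basis :: "nat \<Rightarrow> nat \<Rightarrow> (nat \<Rightarrow> real mat) \<Rightarrow> bool" where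
  "is_basis n r S \<longleftrightarrow> (\<forall>l\<in>{1..r}. S l \<in> carrier_mat n n) \<and>
     (\<forall>c. lin_comb n r S c = 0\<^sub>m n n \<longrightarrow> (\<forall>l\<in>{1..r}. c l = 0))"

definition Pmat :: "nat \<Rightarrow> nat \<Rightarrow> (nat \<Rightarrow> real mat) \<Rightarrow> real mat" where
  "Pmat n r S = mat (n * n) r (\<lambda>(i,l). vecm (S (l + 1)) $ i)"

(* real-form E = diag(E_1,...,E_t, e_{2t+1},...,e_m), E_j = [[alpha_j, beta_j],[-beta_j, alpha_j]] *)
definition realform_E :: "nat \<Rightarrow> nat \<Rightarrow> (nat \<Rightarrow> real) \<Rightarrow> (nat \<Rightarrow> real) \<Rightarrow> (nat \<Rightarrow> real) \<Rightarrow> real mat" where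
  "realform_E m t \<alpha> \<beta> e = mat m m (\<lambda>(i,j).
     if i < 2*t \<and> j < 2*t then
       (if i div 2 = j div 2 then
          (let p = i div 2 + 1 in
           if i mod 2 = j mod 2 then \<alpha> p
           else if i mod 2 = 0 then \<beta> p else - \<beta> p)
        else 0)
     else if i = j then e (i + 1) else 0)"

(* real-form X = [u_1 v_1 ... u_t v_t phi_{2t+1} ... phi_m] in R^{n x m} *)
definition realform_X :: "nat \<Rightarrow> nat \<Rightarrow> nat \<Rightarrow> (nat \<Rightarrow> real vec) \<Rightarrow> (nat \<Rightarrow> real vec) \<Rightarrow> (nat \<Rightarrow> real vec) \<Rightarrow> real mat" where
  "realform_X n m t u v \<phi> = mat n m (\<lambda>(i,c).
     if c < 2*t then (if even c then u (c div 2 + 1) $ i else v (c div 2 + 1) $ i)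
     else \<phi> (c + 1) $ i)"

(* U = [((X E^{k-1})^T (x) I_n) P  ...  (X^T (x) I_n) P] in R^{mn x kr}:
   column block number l (0-based) is ((X E^{k-1-l})^T (x) I_n) P *)
definition Umat :: "nat \<Rightarrow> nat \<Rightarrow> nat \<Rightarrow> nat \<Rightarrow> real mat \<Rightarrow> real mat \<Rightarrow> real mat \<Rightarrow> real mat" where
  "Umat k n m r P X E = mat (m * n) (k * r) (\<lambda>(i,j).
     (kron ((X * (E ^\<^sub>m (k - 1 - j div r)))\<^sup>T) (1\<^sub>m n) * P) $$ (i, j mod r))"

definition msum :: "nat \<Rightarrow> nat \<Rightarrow> nat \<Rightarrow> (nat \<Rightarrow> real mat) \<Rightarrow> real mat" where
  "msum nr nc k F = mat nr nc (\<lambda>ij. \<Sum>i<k. F i $$ ij)"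

definition is_solution :: "nat \<Rightarrow> nat \<Rightarrow> nat \<Rightarrow> real mat set \<Rightarrow> real mat \<Rightarrow> real mat \<Rightarrow> (nat \<Rightarrow> real mat) \<Rightarrow> bool" where
  "is_solution k n m L X E A \<longleftrightarrow>
     (\<forall>i<k. A i \<in> carrier_mat n n \<and> A i \<in> L) \<and>
     msum n m k (\<lambda>i. A i * X * (E ^\<^sub>m i)) = - (X * (E ^\<^sub>m k))"

end

theory Submission
  imports Defs "Jordan_Normal_Form.Gauss_Jordan_Elimination"
begin

(* Vectorizing the equation sum_i A_i X E^i = -X E^k with Vec(A Y) = (Y^T (x) I) Vec(A) and
   Vec(A_i) = P alpha_i turns it into the linear system U z = b for the vector z stacking the
   coordinates of A_(k-1), ..., A_0 in the basis S_1, ..., S_r.  As the S_l are linearly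
   independent, z determines the tuple (A_i) uniquely, so solutions of the matrix equation in L
   correspond bijectively to solutions of U z = b.  The theorem is then the classical description
   of the solutions of a linear system through any generalized inverse G of U (U G U = U):
   solvable iff U G b = b, solutions G b + (I - G U) y, unique iff G U = I.  It is applied to
   G = pinv U, whose existence (and uniqueness, which makes the definite description meaningful)
   follows from Gauss-Jordan elimination and Penrose's construction from the Gram matrices. *)

section \<open>Existence of the Moore--Penrose inverse\<close>

lemma mult_mat_assoc:
  "dim_col A = dim_row B \<Longrightarrow> dim_col B = dim_row C \<Longrightarrow> A * B * C = A * (B * C :: 'a :: semiring_0 mat)"
  by (rule assoc_mult_mat[of A "dim_row A" "dim_col A" B "dim_col B" C "dim_col C"]) auto

lemma transpose_mult_mat:
  "dim_col A = dim_row B \<Longrightarrow> (A * B)\<^sup>T = B\<^sup>T * (A\<^sup>T :: 'a :: comm_semiring_0 mat)"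
  by (rule transpose_mult[of A "dim_row A" "dim_col A" B "dim_col B"]) auto

lemma gram_eq_0_imp_eq_0:
  fixes N :: "'a :: linordered_idom mat"
  assumes N: "N \<in> carrier_mat a c" and gram: "N\<^sup>T * N = 0\<^sub>m c c"
  shows "N = 0\<^sub>m a c"
proof (rule eq_matI)
  fix i j assume "i < dim_row (0\<^sub>m a c :: 'a mat)" and "j < dim_col (0\<^sub>m a c :: 'a mat)"
  hence i: "i < a" and j: "j < c" by auto
  have "(\<Sum>x\<in>{0..<a}. N $$ (x,j) * N $$ (x,j)) = (N\<^sup>T * N) $$ (j,j)"
    using N j by (simp add: scalar_prod_def row_transpose)
  also have "\<dots> = 0" using gram j by simp
  finally have "\<forall>x\<in>{0..<a}. N $$ (x,j) * N $$ (x,j) = 0"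
    by (subst sum_nonneg_eq_0_iff[symmetric]) auto
  thus "N $$ (i,j) = 0\<^sub>m a c $$ (i,j)" using i j by simp
qed (use N in auto)

lemma gram_mult_cancel:
  fixes M W W' :: "'a :: linordered_idom mat"
  assumes M: "M \<in> carrier_mat a c" and W: "W \<in> carrier_mat c d" and W': "W' \<in> carrier_mat c d"
    and eq: "M\<^sup>T * M * W = M\<^sup>T * M * W'"
  shows "M * W = M * W'"
proof -
  define D where "D = W - W'"
  have D: "D \<in> carrier_mat c d" unfolding D_def using W' by (rule minus_carrier_mat)
  have "M\<^sup>T * M * D = M\<^sup>T * M * W - M\<^sup>T * M * W'"
    unfolding D_def by (rule mult_minus_distrib_mat) (use M W W' in auto)
  also have "\<dots> = 0\<^sub>m c d" unfolding eq by (rule minus_r_inv_mat) (use M W' in auto)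
  finally have "(M * D)\<^sup>T * (M * D) = 0\<^sub>m d d"
    using M D by (simp add: transpose_mult_mat mult_mat_assoc)
  hence "M * D = 0\<^sub>m a d" using gram_eq_0_imp_eq_0[of "M * D" a d] M D by simp
  hence diff: "M * W - M * W' = 0\<^sub>m a d" unfolding D_def using M W W' by (simp add: mult_minus_distrib_mat)
  show ?thesis
  proof (rule eq_matI)
    fix i j assume i: "i < dim_row (M * W')" and j: "j < dim_col (M * W')"
    have "(M * W - M * W') $$ (i, j) = 0" using diff i j M W' by simp
    thus "(M * W) $$ (i, j) = (M * W') $$ (i, j)" using i j by simp
  qed (use M W W' in auto)
qed

lemma row_echelon_form_generalized_inverse:
  fixes C :: "'a :: field mat"
  assumes C: "C \<in> carrier_mat a c" and "row_echelon_form C"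
  shows "\<exists>R \<in> carrier_mat c a. C * R * C = C"
proof -
  from assms obtain f where "pivot_fun C f c" unfolding row_echelon_form_def by auto
  note piv = pivot_funD[OF carrier_matD(1)[OF C] this]
  \<comment> \<open>\<open>C * R\<close> is the diagonal projection onto the rows that carry a pivot\<close>
  define R :: "'a mat" where "R = mat c a (\<lambda>(j,i). if f i < c \<and> j = f i then 1 else 0)"
  have R: "R \<in> carrier_mat c a" unfolding R_def by auto
  have CR: "(C * R) $$ (x,i) = (if f i < c \<and> x = i then 1 else 0)" if x: "x < a" and i: "i < a" for x i
  proof -
    have "(C * R) $$ (x,i) = (\<Sum>j\<in>{0..<c}. C $$ (x,j) * (if f i < c \<and> j = f i then 1 else 0))"
      using x i C R by (simp add: scalar_prod_def R_def)
    also have "\<dots> = (if f i < c then C $$ (x, f i) else 0)"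
      by (auto simp: if_distrib cong: if_cong)
    also have "\<dots> = (if f i < c \<and> x = i then 1 else 0)"
      using piv(4)[OF i] piv(5)[OF i _ x] by auto
    finally show ?thesis .
  qed
  have "C * R * C = C"
  proof (rule eq_matI)
    fix x y assume "x < dim_row C" and "y < dim_col C"
    hence x: "x < a" and y: "y < c" using C by auto
    have "(C * R * C) $$ (x,y) = (\<Sum>i\<in>{0..<a}. (C * R) $$ (x,i) * C $$ (i,y))"
      using x y C R by (simp add: scalar_prod_def del: assoc_mult_mat)
    also have "\<dots> = (\<Sum>i\<in>{0..<a}. if i = x then (if f x < c then C $$ (x,y) else 0) else 0)"
      by (rule sum.cong) (auto simp: CR x)
    also have "\<dots> = C $$ (x,y)"
      using x y piv(1)[OF x] piv(2)[OF x, of y] by (cases "f x < c") auto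
    finally show "(C * R * C) $$ (x,y) = C $$ (x,y)" .
  qed (use C R in auto)
  thus ?thesis using R by blast
qed

lemma generalized_inverse_exists:
  fixes A :: "'a :: field mat"
  assumes A: "A \<in> carrier_mat a c"
  shows "\<exists>G \<in> carrier_mat c a. A * G * A = A"
proof -
  define C where "C = gauss_jordan_single A"
  note gj = gauss_jordan_single[OF A C_def[symmetric]]
  obtain P Q where CPA: "C = P * A" and P: "P \<in> carrier_mat a a" and Q: "Q \<in> carrier_mat a a"
    and QP: "Q * P = 1\<^sub>m a" using gj(4) by auto
  obtain R where R: "R \<in> carrier_mat c a" and CRC: "C * R * C = C"
    using row_echelon_form_generalized_inverse[OF gj(2,3)] by blast
  have AQC: "A = Q * C" using A P Q QP unfolding CPA by (simp flip: assoc_mult_mat)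
  have "A * (R * P) * A = A * R * (P * A)" using A P R by (simp add: mult_mat_assoc)
  also have "\<dots> = Q * C * R * C" unfolding CPA[symmetric] by (subst AQC) (rule refl)
  also have "\<dots> = Q * (C * R * C)" using Q R gj(2) by (simp add: mult_mat_assoc)
  also have "\<dots> = A" using CRC AQC by simp
  finally show ?thesis using R P by (intro bexI[of _ "R * P"]) auto
qed

lemma symmetric_generalized_inverse_exists:
  fixes B :: "'a :: {field, comm_ring} mat"
  assumes B: "B \<in> carrier_mat c c" and sym: "B\<^sup>T = B"
  shows "\<exists>H \<in> carrier_mat c c. H\<^sup>T = H \<and> B * H * B = B"
proof -
  obtain G where G: "G \<in> carrier_mat c c" and BGB: "B * G * B = B"
    using generalized_inverse_exists[OF B] by blast
  have "B * (G\<^sup>T * B) = (B * G * B)\<^sup>T"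
    using B G sym by (simp add: transpose_mult_mat mult_mat_assoc)
  hence BGtB: "B * (G\<^sup>T * B) = B" using BGB sym by simp
  define H where "H = G\<^sup>T * B * G"
  have "B * H * B = B * (G\<^sup>T * B) * (G * B)" unfolding H_def using B G by (simp add: mult_mat_assoc)
  also have "\<dots> = B" using BGtB BGB B G by (simp add: mult_mat_assoc)
  finally have "B * H * B = B" .
  moreover have "H\<^sup>T = H" unfolding H_def using B G sym by (simp add: transpose_mult_mat mult_mat_assoc)
  moreover have "H \<in> carrier_mat c c" unfolding H_def using B G by auto
  ultimately show ?thesis by blast
qed

lemma pinv_exists:
  fixes A :: "real mat"
  assumes A: "A \<in> carrier_mat a c"
  shows "\<exists>V. is_pinv A V"
proof -
  have AT: "A\<^sup>T \<in> carrier_mat c a" using A by simp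
  obtain H1 where H1: "H1 \<in> carrier_mat c c" "H1\<^sup>T = H1" "A\<^sup>T * A * H1 * (A\<^sup>T * A) = A\<^sup>T * A"
    using symmetric_generalized_inverse_exists[of "A\<^sup>T * A" c] A by (auto simp: transpose_mult_mat)
  obtain H2 where H2: "H2 \<in> carrier_mat a a" "H2\<^sup>T = H2" "A * A\<^sup>T * H2 * (A * A\<^sup>T) = A * A\<^sup>T"
    using symmetric_generalized_inverse_exists[of "A * A\<^sup>T" a] A by (auto simp: transpose_mult_mat)
  have "A\<^sup>T * A * (H1 * (A\<^sup>T * A)) = A\<^sup>T * A * 1\<^sub>m c" using H1 A by (simp add: mult_mat_assoc)
  hence F1: "A * (H1 * (A\<^sup>T * A)) = A"
    using gram_mult_cancel[OF A, of "H1 * (A\<^sup>T * A)" c "1\<^sub>m c"] A H1 by auto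
  have "(A\<^sup>T)\<^sup>T * A\<^sup>T * (H2 * (A * A\<^sup>T)) = (A\<^sup>T)\<^sup>T * A\<^sup>T * 1\<^sub>m a" using H2 A by (simp add: mult_mat_assoc)
  hence "A\<^sup>T * (H2 * (A * A\<^sup>T)) = A\<^sup>T"
    using gram_mult_cancel[OF AT, of "H2 * (A * A\<^sup>T)" a "1\<^sub>m a"] A H2 by auto
  hence "(A\<^sup>T * (H2 * (A * A\<^sup>T)))\<^sup>T = A" by simp
  hence F2: "A * (A\<^sup>T * (H2 * A)) = A" using A H2 by (simp add: transpose_mult_mat mult_mat_assoc)
  have F2': "A * (A\<^sup>T * (H2 * (A * Y))) = A * Y" if "dim_row Y = c" for Y
  proof -
    have "A * (A\<^sup>T * (H2 * (A * Y))) = A * (A\<^sup>T * (H2 * A)) * Y"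
      using A H2 that by (simp add: mult_mat_assoc)
    thus ?thesis using F2 by simp
  qed
  \<comment> \<open>Penrose's formula, from symmetric generalized inverses of the two Gram matrices\<close>
  define V where "V = A\<^sup>T * H2 * A * H1 * A\<^sup>T"
  have V: "V \<in> carrier_mat c a" unfolding V_def using A H1 H2 by auto
  have AV: "A * V = A * (H1 * A\<^sup>T)" unfolding V_def using A H1 H2 by (simp add: mult_mat_assoc F2')
  have VA: "V * A = A\<^sup>T * (H2 * A)" unfolding V_def using A H1 H2 by (simp add: mult_mat_assoc F1)
  have "A * V * A = A" unfolding AV using A H1 by (simp add: mult_mat_assoc F1)
  moreover have "V * A * V = V" unfolding VA unfolding V_def using A H1 H2 by (simp add: mult_mat_assoc F2')
  moreover have "(A * V)\<^sup>T = A * V" unfolding AV using A H1 by (simp add: transpose_mult_mat mult_mat_assoc)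
  moreover have "(V * A)\<^sup>T = V * A" unfolding VA using A H2 by (simp add: transpose_mult_mat mult_mat_assoc)
  ultimately have "is_pinv A V" unfolding is_pinv_def using V A by (simp only: carrier_matD)
  thus ?thesis by blast
qed

lemma is_pinv_absorb:
  assumes "is_pinv A V"
  shows "A\<^sup>T * (A * V) = A\<^sup>T" and "V * A * A\<^sup>T = A\<^sup>T"
    and "V * (V\<^sup>T * A\<^sup>T) = V" and "A\<^sup>T * V\<^sup>T * V = V"
proof -
  have V: "V \<in> carrier_mat (dim_col A) (dim_row A)" and AVA: "A * V * A = A" and VAV: "V * A * V = V"
    and AV: "(A * V)\<^sup>T = A * V" and VA: "(V * A)\<^sup>T = V * A"
    using assms unfolding is_pinv_def by auto
  have "A\<^sup>T = (A * V * A)\<^sup>T" using AVA by simp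
  also have "\<dots> = A\<^sup>T * (A * V)" using V by (simp add: transpose_mult_mat AV)
  finally show "A\<^sup>T * (A * V) = A\<^sup>T" by simp
  have "A\<^sup>T = (A * (V * A))\<^sup>T" using AVA V by (simp add: mult_mat_assoc)
  also have "\<dots> = V * A * A\<^sup>T" using V by (simp add: transpose_mult_mat VA)
  finally show "V * A * A\<^sup>T = A\<^sup>T" by simp
  have "V = V * (A * V)\<^sup>T" using VAV V by (simp add: AV mult_mat_assoc)
  thus "V * (V\<^sup>T * A\<^sup>T) = V" using V by (simp add: transpose_mult_mat)
  have "V = (V * A)\<^sup>T * V" using VAV by (simp add: VA)
  thus "A\<^sup>T * V\<^sup>T * V = V" using V by (simp add: transpose_mult_mat)
qed

lemma pinv_unique:
  assumes V: "is_pinv A V" and W: "is_pinv A W"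
  shows "V = W"
proof -
  have Vc: "V \<in> carrier_mat (dim_col A) (dim_row A)" and Wc: "W \<in> carrier_mat (dim_col A) (dim_row A)"
    using V W unfolding is_pinv_def by auto
  have AV: "V\<^sup>T * A\<^sup>T = A * V" and WA: "A\<^sup>T * W\<^sup>T = W * A"
    using V W Vc Wc unfolding is_pinv_def by (auto simp flip: transpose_mult_mat)
  have "V = V * (V\<^sup>T * (A\<^sup>T * (A * W)))" using is_pinv_absorb(1,3)[OF V] is_pinv_absorb(1)[OF W] by simp
  also have "\<dots> = V * A * V * A * W" using Vc Wc by (simp add: mult_mat_assoc flip: AV)
  also have "\<dots> = V * A * W" using V unfolding is_pinv_def by simp
  finally have 1: "V = V * A * W" .
  have "W = V * A * A\<^sup>T * W\<^sup>T * W" using is_pinv_absorb(2)[OF V] is_pinv_absorb(4)[OF W] by simp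
  also have "\<dots> = V * A * W * A * W" using Vc Wc by (simp add: mult_mat_assoc flip: WA)
  also have "\<dots> = V * A * W" using W Vc Wc unfolding is_pinv_def by (simp add: mult_mat_assoc)
  finally show ?thesis using 1 by simp
qed

lemma is_pinv_pinv: "is_pinv A (pinv A)"
proof -
  obtain V where V: "is_pinv A V" using pinv_exists[of A "dim_row A" "dim_col A"] by auto
  show ?thesis unfolding pinv_def using theI[of "is_pinv A" V] V pinv_unique by blast
qed

section \<open>Linear systems and generalized inverses\<close>

lemma mat_eqI_mult_vec:
  fixes A B :: "'a :: comm_ring_1 mat"
  assumes A: "A \<in> carrier_mat n p" and B: "B \<in> carrier_mat n p"
    and eq: "\<And>y. y \<in> carrier_vec p \<Longrightarrow> A *\<^sub>v y = B *\<^sub>v y"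
  shows "A = B"
proof (rule eq_matI)
  fix i j assume "i < dim_row B" and "j < dim_col B"
  hence i: "i < n" and j: "j < p" using B by auto
  have "A $$ (i,j) = (A *\<^sub>v unit_vec p j) $ i" using A i j by simp
  also have "\<dots> = (B *\<^sub>v unit_vec p j) $ i" using eq[of "unit_vec p j"] by simp
  also have "\<dots> = B $$ (i,j)" using B i j by simp
  finally show "A $$ (i,j) = B $$ (i,j)" .
qed (use A B in auto)

context
  fixes N p :: nat and U G :: "'a :: comm_ring_1 mat" and b :: "'a vec"
  assumes U: "U \<in> carrier_mat N p" and G: "G \<in> carrier_mat p N" and UGU: "U * G * U = U"
    and b: "b \<in> carrier_vec N"
begin

lemma generalized_inverse_solvable_iff:
  "(\<exists>z \<in> carrier_vec p. U *\<^sub>v z = b) \<longleftrightarrow> U * G *\<^sub>v b = b"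
proof
  assume "\<exists>z \<in> carrier_vec p. U *\<^sub>v z = b"
  then obtain z where z: "z \<in> carrier_vec p" and "U *\<^sub>v z = b" by blast
  have "U * G *\<^sub>v b = U * G * U *\<^sub>v z"
    using assoc_mult_mat_vec[of "U * G" N N U p z] U G z \<open>U *\<^sub>v z = b\<close> by simp
  thus "U * G *\<^sub>v b = b" using UGU \<open>U *\<^sub>v z = b\<close> by simp
next
  assume "U * G *\<^sub>v b = b"
  moreover have "G *\<^sub>v b \<in> carrier_vec p" using G b by simp
  ultimately show "\<exists>z \<in> carrier_vec p. U *\<^sub>v z = b" using U G b by (auto simp: assoc_mult_mat_vec)
qed

lemma generalized_inverse_solutions:
  assumes consistent: "U * G *\<^sub>v b = b"
  shows "z \<in> carrier_vec p \<and> U *\<^sub>v z = b \<longleftrightarrow>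
    (\<exists>y \<in> carrier_vec p. z = G *\<^sub>v b + (1\<^sub>m p - G * U) *\<^sub>v y)"
proof -
  have GU: "G * U \<in> carrier_mat p p" using G U by simp
  have Gb: "G *\<^sub>v b \<in> carrier_vec p" using G b by simp
  have proj: "(1\<^sub>m p - G * U) *\<^sub>v y = y - G *\<^sub>v (U *\<^sub>v y)" if y: "y \<in> carrier_vec p" for y
    using G U y by (simp add: minus_mult_distrib_mat_vec[OF _ GU y])
  show ?thesis
  proof
    assume "z \<in> carrier_vec p \<and> U *\<^sub>v z = b"
    hence z: "z \<in> carrier_vec p" and "U *\<^sub>v z = b" by auto
    hence "(1\<^sub>m p - G * U) *\<^sub>v z = z - G *\<^sub>v b" by (simp add: proj)
    hence "z = G *\<^sub>v b + (1\<^sub>m p - G * U) *\<^sub>v z" by (intro eq_vecI) (use z Gb carrier_matD[OF G] in auto)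
    thus "\<exists>y \<in> carrier_vec p. z = G *\<^sub>v b + (1\<^sub>m p - G * U) *\<^sub>v y" using z by blast
  next
    assume "\<exists>y \<in> carrier_vec p. z = G *\<^sub>v b + (1\<^sub>m p - G * U) *\<^sub>v y"
    then obtain y where y: "y \<in> carrier_vec p" and z: "z = G *\<^sub>v b + (y - G *\<^sub>v (U *\<^sub>v y))"
      by (auto simp: proj)
    have Uy: "U *\<^sub>v y \<in> carrier_vec N" using U y by simp
    have "U *\<^sub>v (G *\<^sub>v (U *\<^sub>v y)) = U * G * U *\<^sub>v y"
      by (simp only: assoc_mult_mat_vec[OF mult_carrier_mat[OF U G] U y]
          assoc_mult_mat_vec[OF U G Uy])
    hence "U *\<^sub>v (G *\<^sub>v (U *\<^sub>v y)) = U *\<^sub>v y" using UGU by simp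
    hence "U *\<^sub>v z = b" unfolding z using U G b y consistent
      by (simp add: mult_add_distrib_mat_vec mult_minus_distrib_mat_vec minus_cancel_vec[OF Uy])
    moreover have "z \<in> carrier_vec p" unfolding z using Gb G U y by simp
    ultimately show "z \<in> carrier_vec p \<and> U *\<^sub>v z = b" by blast
  qed
qed

lemma generalized_inverse_unique_solution_iff:
  assumes consistent: "U * G *\<^sub>v b = b"
  shows "(\<forall>z \<in> carrier_vec p. \<forall>z' \<in> carrier_vec p. U *\<^sub>v z = b \<longrightarrow> U *\<^sub>v z' = b \<longrightarrow> z = z')
    \<longleftrightarrow> G * U = 1\<^sub>m p"
proof
  assume unique: "\<forall>z \<in> carrier_vec p. \<forall>z' \<in> carrier_vec p. U *\<^sub>v z = b \<longrightarrow> U *\<^sub>v z' = b \<longrightarrow> z = z'"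
  show "G * U = 1\<^sub>m p"
  proof (rule mat_eqI_mult_vec)
    fix y :: "'a vec" assume y: "y \<in> carrier_vec p"
    have "G *\<^sub>v b \<in> carrier_vec p" and "U *\<^sub>v (G *\<^sub>v b) = b"
      using consistent U G b by (simp_all add: assoc_mult_mat_vec)
    moreover have "G *\<^sub>v b + (1\<^sub>m p - G * U) *\<^sub>v y \<in> carrier_vec p"
      and "U *\<^sub>v (G *\<^sub>v b + (1\<^sub>m p - G * U) *\<^sub>v y) = b"
      using generalized_inverse_solutions[OF consistent] y by blast+
    ultimately have eq: "G *\<^sub>v b + (1\<^sub>m p - G * U) *\<^sub>v y = G *\<^sub>v b" using unique by blast
    show "G * U *\<^sub>v y = 1\<^sub>m p *\<^sub>v y"
    proof (rule eq_vecI)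
      fix i assume i: "i < dim_vec (1\<^sub>m p *\<^sub>v y)"
      have "(G *\<^sub>v b + (1\<^sub>m p - G * U) *\<^sub>v y) $ i = (G *\<^sub>v b) $ i" using eq by simp
      thus "(G * U *\<^sub>v y) $ i = (1\<^sub>m p *\<^sub>v y) $ i"
        using i G U y by (simp add: minus_mult_distrib_mat_vec[of "1\<^sub>m p" p p "G * U" y])
    qed (use G in auto)
  qed (use G U in auto)
next
  assume GU: "G * U = 1\<^sub>m p"
  have solution: "z = G *\<^sub>v b" if z: "z \<in> carrier_vec p" and "U *\<^sub>v z = b" for z
  proof -
    have "z = G * U *\<^sub>v z" using z unfolding GU by simp
    also have "\<dots> = G *\<^sub>v b" by (simp only: assoc_mult_mat_vec[OF G U z] \<open>U *\<^sub>v z = b\<close>)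
    finally show ?thesis .
  qed
  show "\<forall>z \<in> carrier_vec p. \<forall>z' \<in> carrier_vec p. U *\<^sub>v z = b \<longrightarrow> U *\<^sub>v z' = b \<longrightarrow> z = z'"
    by (metis solution)
qed

end

section \<open>Vectorization and coordinates\<close>

lemma sum_lessThan_mult_split:
  fixes k r :: nat and f :: "nat \<Rightarrow> 'a :: comm_monoid_add"
  shows "(\<Sum>j < k * r. f j) = (\<Sum>l < k. \<Sum>c < r. f (l * r + c))"
proof -
  have "(\<Sum>j < k * r. f j) = (\<Sum>l < k. \<Sum>j \<in> {l * r..<l * r + r}. f j)"
    using sum.nat_group[of f r k] by simp
  also have "\<dots> = (\<Sum>l < k. \<Sum>c < r. f (l * r + c))"
    using sum.shift_bounds_nat_ivl[of f 0 "l * r" r for l] by (simp add: atLeast0LessThan add.commute)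
  finally show ?thesis .
qed

lemma block_index_less:
  fixes l c k r :: nat
  assumes "l < k" and "c < r"
  shows "l * r + c < k * r"
proof -
  have "l * r + c < (l + 1) * r" using assms(2) by simp
  also have "\<dots> \<le> k * r" using assms(1) by (intro mult_le_mono1) simp
  finally show ?thesis .
qed

lemma index_mult_mat_vec_sum:
  assumes "A \<in> carrier_mat nr nc" and "v \<in> carrier_vec nc" and "i < nr"
  shows "(A *\<^sub>v v) $ i = (\<Sum>j < nc. A $$ (i, j) * v $ j)"
  using assms by (simp add: scalar_prod_def atLeast0LessThan)

lemma index_kron:
  "i < dim_row A * dim_row B \<Longrightarrow> j < dim_col A * dim_col B \<Longrightarrow>
    kron A B $$ (i, j) = A $$ (i div dim_row B, j div dim_col B) * B $$ (i mod dim_row B, j mod dim_col B)"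
  "dim_row (kron A B) = dim_row A * dim_row B" "dim_col (kron A B) = dim_col A * dim_col B"
  unfolding kron_def by auto

lemma kron_carrier_mat:
  assumes "A \<in> carrier_mat a b" and "B \<in> carrier_mat c d"
  shows "kron A B \<in> carrier_mat (a * c) (b * d)"
  using assms unfolding kron_def carrier_mat_def by simp

lemma vecm_index: "A \<in> carrier_mat a c \<Longrightarrow> q < a * c \<Longrightarrow> vecm A $ q = A $$ (q mod a, q div a)"
  unfolding vecm_def by simp

lemma vecm_carrier: "A \<in> carrier_mat a c \<Longrightarrow> vecm A \<in> carrier_vec (a * c)"
  unfolding vecm_def by simp

lemma vecm_inject:
  assumes A: "A \<in> carrier_mat a c" and B: "B \<in> carrier_mat a c"
  shows "vecm A = vecm B \<longleftrightarrow> A = B"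
proof
  assume eq: "vecm A = vecm B"
  show "A = B"
  proof (rule eq_matI)
    fix i j assume "i < dim_row B" and "j < dim_col B"
    hence i: "i < a" and j: "j < c" using B by auto
    have q: "j * a + i < a * c" using block_index_less[OF j i] by (simp add: mult.commute)
    have "A $$ (i, j) = vecm A $ (j * a + i)" using vecm_index[OF A q] i by simp
    also have "\<dots> = B $$ (i, j)" using vecm_index[OF B q] i eq by simp
    finally show "A $$ (i, j) = B $$ (i, j)" .
  qed (use A B in auto)
qed simp

lemma kron_transpose_one_mult_vecm:
  fixes A Y :: "real mat"
  assumes A: "A \<in> carrier_mat a c" and Y: "Y \<in> carrier_mat c d"
  shows "kron Y\<^sup>T (1\<^sub>m a) *\<^sub>v vecm A = vecm (A * Y)"
proof (rule eq_vecI)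
  have AY: "A * Y \<in> carrier_mat a d" using A Y by simp
  show dims: "dim_vec (kron Y\<^sup>T (1\<^sub>m a) *\<^sub>v vecm A) = dim_vec (vecm (A * Y))"
    using vecm_carrier[OF AY] Y by (simp add: index_kron mult.commute)
  fix q assume "q < dim_vec (vecm (A * Y))"
  hence q: "q < a * d" using vecm_carrier[OF AY] by simp
  have a: "a > 0" using q by (cases a) auto
  have qa: "q mod a < a" and qd: "q div a < d"
    using a q by (auto simp: less_mult_imp_div_less mult.commute)
  have "(kron Y\<^sup>T (1\<^sub>m a) *\<^sub>v vecm A) $ q = (\<Sum>s < c * a. kron Y\<^sup>T (1\<^sub>m a) $$ (q, s) * vecm A $ s)"
    using q Y vecm_carrier[OF A]
    by (simp add: index_kron scalar_prod_def atLeast0LessThan mult.commute)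
  also have "\<dots> = (\<Sum>j < c. \<Sum>i < a. Y $$ (j, q div a) * (if q mod a = i then A $$ (i, j) else 0))"
    unfolding sum_lessThan_mult_split
  proof (intro sum.cong refl)
    fix j i assume "j \<in> {..<c}" and "i \<in> {..<a}"
    hence j: "j < c" and i: "i < a" by auto
    have "j * a + i < a * c" using block_index_less[OF j i] by (simp add: mult.commute)
    thus "kron Y\<^sup>T (1\<^sub>m a) $$ (q, j * a + i) * vecm A $ (j * a + i)
      = Y $$ (j, q div a) * (if q mod a = i then A $$ (i, j) else 0)"
      using Y i j q qd vecm_index[OF A] by (simp add: index_kron mult.commute)
  qed
  also have "\<dots> = (\<Sum>j < c. A $$ (q mod a, j) * Y $$ (j, q div a))"
    using qa by (simp add: if_distrib[of "(*) _"] sum.delta mult.commute cong: if_cong)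
  also have "\<dots> = vecm (A * Y) $ q"
    using A Y q qa qd by (simp add: vecm_index[OF AY] scalar_prod_def atLeast0LessThan)
  finally show "(kron Y\<^sup>T (1\<^sub>m a) *\<^sub>v vecm A) $ q = vecm (A * Y) $ q" .
qed

definition vec_block :: "nat \<Rightarrow> 'a vec \<Rightarrow> nat \<Rightarrow> 'a vec" where
  "vec_block r z l = vec r (\<lambda>c. z $ (l * r + c))"

definition mat_of_coords :: "nat \<Rightarrow> nat \<Rightarrow> (nat \<Rightarrow> real mat) \<Rightarrow> real vec \<Rightarrow> real mat" where
  "mat_of_coords n r S w = lin_comb n r S (\<lambda>l. w $ (l - 1))"

lemma index_lin_comb:
  "i < n \<Longrightarrow> j < n \<Longrightarrow> lin_comb n r S c $$ (i, j) = (\<Sum>l < r. c (Suc l) * S (Suc l) $$ (i, j))"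
  unfolding lin_comb_def by (simp add: sum.atLeast1_atMost_eq)

lemma lin_comb_carrier [simp]: "lin_comb n r S c \<in> carrier_mat n n"
  and dim_lin_comb [simp]: "dim_row (lin_comb n r S c) = n" "dim_col (lin_comb n r S c) = n"
  unfolding lin_comb_def by simp_all

lemma index_unit_row:
  "dim_row (unit_row k j) = 1" "dim_col (unit_row k j) = k"
  "c < k \<Longrightarrow> unit_row k j $$ (0, c) = (if c = j - 1 then 1 else 0)"
  unfolding unit_row_def by simp_all

lemma lin_comb_cong: "(\<And>l. l \<in> {1..r} \<Longrightarrow> c l = c' l) \<Longrightarrow> lin_comb n r S c = lin_comb n r S c'"
  unfolding lin_comb_def by (intro arg_cong[where f = "mat n n"] ext sum.cong) auto

lemma kron_unit_row_mult_vec: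
  fixes z :: "real vec"
  assumes i: "i < k" and z: "z \<in> carrier_vec (k * r)"
  shows "kron (unit_row k (k - i)) (1\<^sub>m r) *\<^sub>v z = vec_block r z (k - 1 - i)"
proof (rule eq_vecI)
  show "dim_vec (kron (unit_row k (k - i)) (1\<^sub>m r) *\<^sub>v z) = dim_vec (vec_block r z (k - 1 - i))"
    by (simp add: index_kron unit_row_def vec_block_def)
  fix a assume "a < dim_vec (vec_block r z (k - 1 - i))"
  hence a: "a < r" by (simp add: vec_block_def)
  have "(kron (unit_row k (k - i)) (1\<^sub>m r) *\<^sub>v z) $ a
      = (\<Sum>l < k. \<Sum>c < r. kron (unit_row k (k - i)) (1\<^sub>m r) $$ (a, l * r + c) * z $ (l * r + c))"
    using a z by (simp add: index_kron(2,3) index_unit_row(1,2) scalar_prod_def atLeast0LessThan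
        sum_lessThan_mult_split)
  also have "\<dots> = (\<Sum>l < k. \<Sum>c < r. if l = k - 1 - i \<and> c = a then z $ (l * r + c) else 0)"
  proof (intro sum.cong refl)
    fix l c assume "l \<in> {..<k}" and "c \<in> {..<r}"
    hence l: "l < k" and c: "c < r" by auto
    have "l * r + c < k * r" using l c by (rule block_index_less)
    thus "kron (unit_row k (k - i)) (1\<^sub>m r) $$ (a, l * r + c) * z $ (l * r + c)
      = (if l = k - 1 - i \<and> c = a then z $ (l * r + c) else 0)"
      using a l c by (auto simp: index_kron index_unit_row)
  qed
  also have "\<dots> = (\<Sum>l < k. if l = k - 1 - i then z $ (l * r + a) else 0)"
    using a by (intro sum.cong refl) (simp add: sum.delta)
  also have "\<dots> = z $ ((k - 1 - i) * r + a)"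
    using i by simp
  finally show "(kron (unit_row k (k - i)) (1\<^sub>m r) *\<^sub>v z) $ a = vec_block r z (k - 1 - i) $ a"
    using a by (simp add: vec_block_def)
qed

lemma Pmat_mult_vec:
  assumes S: "\<forall>l\<in>{1..r}. S l \<in> carrier_mat n n" and w: "w \<in> carrier_vec r"
  shows "Pmat n r S *\<^sub>v w = vecm (mat_of_coords n r S w)"
proof (rule eq_vecI)
  show "dim_vec (Pmat n r S *\<^sub>v w) = dim_vec (vecm (mat_of_coords n r S w))"
    by (simp add: Pmat_def vecm_def mat_of_coords_def)
  fix q assume "q < dim_vec (vecm (mat_of_coords n r S w))"
  hence q: "q < n * n" by (simp add: vecm_def mat_of_coords_def)
  have "n > 0" using q by (cases n) auto
  hence qn: "q mod n < n" "q div n < n" using q by (simp_all add: less_mult_imp_div_less)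
  have "(Pmat n r S *\<^sub>v w) $ q = (\<Sum>l < r. Pmat n r S $$ (q, l) * w $ l)"
    using q w by (simp add: Pmat_def scalar_prod_def atLeast0LessThan)
  also have "\<dots> = (\<Sum>l < r. w $ (Suc l - 1) * S (Suc l) $$ (q mod n, q div n))"
  proof (intro sum.cong refl)
    fix l assume "l \<in> {..<r}"
    hence "S (Suc l) \<in> carrier_mat n n" using S by auto
    thus "Pmat n r S $$ (q, l) * w $ l = w $ (Suc l - 1) * S (Suc l) $$ (q mod n, q div n)"
      using q \<open>l \<in> {..<r}\<close> by (simp add: Pmat_def vecm_index)
  qed
  also have "\<dots> = vecm (mat_of_coords n r S w) $ q"
    unfolding vecm_index[OF lin_comb_carrier q] mat_of_coords_def index_lin_comb[OF qn] ..
  finally show "(Pmat n r S *\<^sub>v w) $ q = vecm (mat_of_coords n r S w) $ q" .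
qed

lemma kron_transpose_one_Pmat_mult_vec:
  assumes S: "\<forall>l\<in>{1..r}. S l \<in> carrier_mat n n" and Y: "Y \<in> carrier_mat n d"
    and w: "w \<in> carrier_vec r"
  shows "kron Y\<^sup>T (1\<^sub>m n) * Pmat n r S *\<^sub>v w = vecm (mat_of_coords n r S w * Y)"
proof -
  have "kron Y\<^sup>T (1\<^sub>m n) \<in> carrier_mat (d * n) (n * n)"
    using Y by (intro kron_carrier_mat[of _ d n _ n n]) simp_all
  moreover have "Pmat n r S \<in> carrier_mat (n * n) r" by (simp add: Pmat_def)
  ultimately have "kron Y\<^sup>T (1\<^sub>m n) * Pmat n r S *\<^sub>v w = kron Y\<^sup>T (1\<^sub>m n) *\<^sub>v vecm (mat_of_coords n r S w)"
    using w by (simp add: Pmat_mult_vec[OF S w])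
  also have "\<dots> = vecm (mat_of_coords n r S w * Y)"
    unfolding mat_of_coords_def by (rule kron_transpose_one_mult_vecm[OF lin_comb_carrier Y])
  finally show ?thesis .
qed

section \<open>The stacked linear system\<close>

lemma Umat_carrier: "Umat k n m r P X E \<in> carrier_mat (m * n) (k * r)"
  unfolding Umat_def by (rule mat_carrier)

lemma index_Umat:
  assumes q: "q < m * n" and l: "l < k" and c: "c < r"
  shows "Umat k n m r P X E $$ (q, l * r + c) = (kron (X * E ^\<^sub>m (k - 1 - l))\<^sup>T (1\<^sub>m n) * P) $$ (q, c)"
proof -
  have "(l * r + c) div r = l" and "(l * r + c) mod r = c" using c by auto
  thus ?thesis unfolding Umat_def using q block_index_less[OF l c] by (simp only: index_mat split)
qed

lemma index_Umat_mult_vec: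
  assumes P: "P \<in> carrier_mat (n * n) r" and X: "X \<in> carrier_mat n m" and E: "E \<in> carrier_mat m m"
    and z: "z \<in> carrier_vec (k * r)" and q: "q < m * n"
  shows "(Umat k n m r P X E *\<^sub>v z) $ q
    = (\<Sum>l < k. (kron (X * E ^\<^sub>m (k - 1 - l))\<^sup>T (1\<^sub>m n) * P *\<^sub>v vec_block r z l) $ q)"
proof -
  let ?K = "\<lambda>l. kron (X * E ^\<^sub>m (k - 1 - l))\<^sup>T (1\<^sub>m n) * P"
  have K: "?K l \<in> carrier_mat (m * n) r" for l
  proof -
    have "(X * E ^\<^sub>m (k - 1 - l))\<^sup>T \<in> carrier_mat m n" using X E by simp
    hence "kron (X * E ^\<^sub>m (k - 1 - l))\<^sup>T (1\<^sub>m n) \<in> carrier_mat (m * n) (n * n)"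
      by (rule kron_carrier_mat) simp
    thus ?thesis using P by simp
  qed
  have "(Umat k n m r P X E *\<^sub>v z) $ q = (\<Sum>j < k * r. Umat k n m r P X E $$ (q, j) * z $ j)"
    using q by (intro index_mult_mat_vec_sum[OF Umat_carrier z]) simp
  also have "\<dots> = (\<Sum>l < k. \<Sum>c < r. ?K l $$ (q, c) * vec_block r z l $ c)"
    unfolding sum_lessThan_mult_split
  proof (intro sum.cong refl)
    fix l c assume "l \<in> {..<k}" and "c \<in> {..<r}"
    hence "l < k" and c: "c < r" by auto
    thus "Umat k n m r P X E $$ (q, l * r + c) * z $ (l * r + c) = ?K l $$ (q, c) * vec_block r z l $ c"
      using q by (simp add: index_Umat vec_block_def)
  qed
  also have "\<dots> = (\<Sum>l < k. (?K l *\<^sub>v vec_block r z l) $ q)"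
  proof (intro sum.cong refl)
    fix l
    show "(\<Sum>c < r. ?K l $$ (q, c) * vec_block r z l $ c) = (?K l *\<^sub>v vec_block r z l) $ q"
      using q carrier_matD[OF K[of l]] by (simp add: scalar_prod_def atLeast0LessThan vec_block_def)
  qed
  finally show ?thesis .
qed

text \<open>The coordinate vector \<open>z\<close> stacks the coordinates of \<open>A\<^sub>k\<^sub>-\<^sub>1, \<dots>, A\<^sub>0\<close>,
  in the order of the column blocks of \<open>U\<close>.\<close>

definition coeffs_of_stack :: "nat \<Rightarrow> nat \<Rightarrow> nat \<Rightarrow> (nat \<Rightarrow> real mat) \<Rightarrow> real vec \<Rightarrow> nat \<Rightarrow> real mat"
  where "coeffs_of_stack k n r S z i = mat_of_coords n r S (vec_block r z (k - 1 - i))"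

lemma coeffs_of_stack_carrier [simp]: "coeffs_of_stack k n r S z i \<in> carrier_mat n n"
  by (simp add: coeffs_of_stack_def mat_of_coords_def)

lemma Umat_mult_vec:
  assumes S: "\<forall>l\<in>{1..r}. S l \<in> carrier_mat n n" and X: "X \<in> carrier_mat n m"
    and E: "E \<in> carrier_mat m m" and z: "z \<in> carrier_vec (k * r)"
  shows "Umat k n m r (Pmat n r S) X E *\<^sub>v z
    = vecm (msum n m k (\<lambda>i. coeffs_of_stack k n r S z i * X * E ^\<^sub>m i))"
proof (rule eq_vecI)
  let ?Y = "\<lambda>l. X * E ^\<^sub>m (k - 1 - l)"
  let ?A = "\<lambda>l. mat_of_coords n r S (vec_block r z l)"
  have P: "Pmat n r S \<in> carrier_mat (n * n) r" by (simp add: Pmat_def)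
  have Y: "?Y l \<in> carrier_mat n m" for l using X E by simp
  have sum: "msum n m k F \<in> carrier_mat n m" for F by (simp add: msum_def)
  show "dim_vec (Umat k n m r (Pmat n r S) X E *\<^sub>v z) = dim_vec (vecm (msum n m k
      (\<lambda>i. coeffs_of_stack k n r S z i * X * E ^\<^sub>m i)))"
    using carrier_vecD[OF vecm_carrier[OF sum]] by (simp add: Umat_def mult.commute)
  fix q assume "q < dim_vec (vecm (msum n m k (\<lambda>i. coeffs_of_stack k n r S z i * X * E ^\<^sub>m i)))"
  hence q': "q < n * m" using carrier_vecD[OF vecm_carrier[OF sum]] by simp
  hence q: "q < m * n" by (simp add: mult.commute)
  have "n > 0" using q by (cases n) auto
  hence qn: "q mod n < n" "q div n < m" using q by (simp_all add: less_mult_imp_div_less)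
  have blk: "vec_block r z l \<in> carrier_vec r" for l by (simp add: vec_block_def)
  have "(Umat k n m r (Pmat n r S) X E *\<^sub>v z) $ q = (\<Sum>l < k. vecm (?A l * ?Y l) $ q)"
    unfolding index_Umat_mult_vec[OF P X E z q] kron_transpose_one_Pmat_mult_vec[OF S Y blk] ..
  also have "\<dots> = (\<Sum>l < k. (?A l * ?Y l) $$ (q mod n, q div n))"
    unfolding mat_of_coords_def using vecm_index[OF mult_carrier_mat[OF lin_comb_carrier Y] q'] by simp
  also have "\<dots> = (\<Sum>i < k. (?A (k - Suc i) * ?Y (k - Suc i)) $$ (q mod n, q div n))"
    by (rule sum.nat_diff_reindex[symmetric])
  also have "\<dots> = (\<Sum>i < k. (coeffs_of_stack k n r S z i * X * E ^\<^sub>m i) $$ (q mod n, q div n))"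
  proof (intro sum.cong refl)
    fix i assume "i \<in> {..<k}"
    hence "k - 1 - (k - Suc i) = i" by auto
    thus "(?A (k - Suc i) * ?Y (k - Suc i)) $$ (q mod n, q div n)
      = (coeffs_of_stack k n r S z i * X * E ^\<^sub>m i) $$ (q mod n, q div n)"
      by (simp add: coeffs_of_stack_def mat_of_coords_def
          assoc_mult_mat[OF lin_comb_carrier X pow_carrier_mat[OF E]])
  qed
  also have "\<dots> = vecm (msum n m k (\<lambda>i. coeffs_of_stack k n r S z i * X * E ^\<^sub>m i)) $ q"
    unfolding vecm_index[OF sum q'] using qn by (simp add: msum_def)
  finally show "(Umat k n m r (Pmat n r S) X E *\<^sub>v z) $ q
    = vecm (msum n m k (\<lambda>i. coeffs_of_stack k n r S z i * X * E ^\<^sub>m i)) $ q" .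
qed

lemma span_L_tuple_eq_coeffs_of_stack:
  assumes "\<forall>i<k. A i \<in> span_L n r S"
  shows "\<exists>z \<in> carrier_vec (k * r). \<forall>i<k. A i = coeffs_of_stack k n r S z i"
proof -
  have "\<forall>i. \<exists>c. i < k \<longrightarrow> A i = lin_comb n r S c" using assms unfolding span_L_def by blast
  then obtain c where c: "\<And>i. i < k \<Longrightarrow> A i = lin_comb n r S (c i)"
    using choice[of "\<lambda>i c. i < k \<longrightarrow> A i = lin_comb n r S c"] by blast
  define z where "z = vec (k * r) (\<lambda>j. c (k - 1 - j div r) (j mod r + 1))"
  have "A i = coeffs_of_stack k n r S z i" if i: "i < k" for i
    unfolding c[OF i] coeffs_of_stack_def mat_of_coords_def
  proof (rule lin_comb_cong)
    fix l assume l: "l \<in> {1..r}"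
    define j where "j = (k - 1 - i) * r + (l - 1)"
    have "l - 1 < r" using l by auto
    hence "j < k * r" and "j div r = k - 1 - i" and "j mod r = l - 1"
      using i unfolding j_def by (auto intro: block_index_less)
    hence "z $ j = c i l" using i l by (simp add: z_def)
    thus "c i l = vec_block r z (k - 1 - i) $ (l - 1)"
      using \<open>l - 1 < r\<close> by (simp add: vec_block_def j_def)
  qed
  moreover have "z \<in> carrier_vec (k * r)" by (simp add: z_def)
  ultimately show ?thesis by blast
qed

lemma mat_of_coords_inject:
  assumes basis: "is_basis n r S" and w: "w \<in> carrier_vec r" and w': "w' \<in> carrier_vec r"
    and eq: "mat_of_coords n r S w = mat_of_coords n r S w'"
  shows "w = w'"
proof -
  have "lin_comb n r S (\<lambda>l. w $ (l - 1) - w' $ (l - 1)) = 0\<^sub>m n n"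
  proof (rule eq_matI)
    fix i j assume "i < dim_row (0\<^sub>m n n :: real mat)" and "j < dim_col (0\<^sub>m n n :: real mat)"
    moreover have "mat_of_coords n r S w $$ (i, j) = mat_of_coords n r S w' $$ (i, j)" using eq by simp
    ultimately show "lin_comb n r S (\<lambda>l. w $ (l - 1) - w' $ (l - 1)) $$ (i, j) = 0\<^sub>m n n $$ (i, j)"
      by (simp add: lin_comb_def mat_of_coords_def left_diff_distrib sum_subtractf)
  qed simp_all
  hence coords: "\<forall>l\<in>{1..r}. w $ (l - 1) - w' $ (l - 1) = 0"
    using basis unfolding is_basis_def by blast
  show ?thesis
  proof (rule eq_vecI)
    fix c assume "c < dim_vec w'"
    thus "w $ c = w' $ c" using coords[rule_format, of "Suc c"] w' by simp
  qed (use w w' in simp)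
qed

lemma coeffs_of_stack_inject:
  assumes basis: "is_basis n r S" and z: "z \<in> carrier_vec (k * r)" and z': "z' \<in> carrier_vec (k * r)"
    and eq: "\<forall>i<k. coeffs_of_stack k n r S z i = coeffs_of_stack k n r S z' i"
  shows "z = z'"
proof (rule eq_vecI)
  fix j assume "j < dim_vec z'"
  hence j: "j < k * r" using z' by simp
  hence r: "r > 0" by (cases r) auto
  define l where "l = j div r"
  have l: "l < k" using j by (simp add: l_def less_mult_imp_div_less)
  hence i: "k - 1 - l < k" and reflect: "k - 1 - (k - 1 - l) = l" by auto
  have "mat_of_coords n r S (vec_block r z l) = mat_of_coords n r S (vec_block r z' l)"
    using eq[rule_format, OF i] by (simp only: coeffs_of_stack_def reflect)
  hence "vec_block r z l = vec_block r z' l"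
    by (rule mat_of_coords_inject[OF basis, rotated 2]) (simp_all add: vec_block_def)
  hence "vec_block r z l $ (j mod r) = vec_block r z' l $ (j mod r)" by simp
  thus "z $ j = z' $ j" using r by (simp add: vec_block_def l_def)
qed (use z z' in simp)

lemma vecm_eq_Pmat_kron_unit_row_iff:
  assumes S: "\<forall>l\<in>{1..r}. S l \<in> carrier_mat n n" and A: "A \<in> carrier_mat n n"
    and i: "i < k" and z: "z \<in> carrier_vec (k * r)"
  shows "vecm A = Pmat n r S *\<^sub>v (kron (unit_row k (k - i)) (1\<^sub>m r) *\<^sub>v z)
    \<longleftrightarrow> A = coeffs_of_stack k n r S z i"
proof -
  have "vec_block r z (k - 1 - i) \<in> carrier_vec r" by (simp add: vec_block_def)
  hence "Pmat n r S *\<^sub>v (kron (unit_row k (k - i)) (1\<^sub>m r) *\<^sub>v z) = vecm (coeffs_of_stack k n r S z i)"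
    by (simp add: kron_unit_row_mult_vec[OF i z] Pmat_mult_vec[OF S] coeffs_of_stack_def)
  thus ?thesis using vecm_inject[OF A coeffs_of_stack_carrier] by simp
qed

lemma coeffs_of_stack_in_span_L: "coeffs_of_stack k n r S z i \<in> span_L n r S"
  unfolding coeffs_of_stack_def mat_of_coords_def span_L_def by blast

locale eigenpair_linear_system =
  fixes k n m r :: nat and S :: "nat \<Rightarrow> real mat" and X E G :: "real mat"
  assumes basis: "is_basis n r S"
    and X: "X \<in> carrier_mat n m" and E: "E \<in> carrier_mat m m"
    and G: "G \<in> carrier_mat (k * r) (m * n)"
    and generalized_inverse: "Umat k n m r (Pmat n r S) X E * G * Umat k n m r (Pmat n r S) X E
      = Umat k n m r (Pmat n r S) X E"
begin

abbreviation U where "U \<equiv> Umat k n m r (Pmat n r S) X E"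
abbreviation b where "b \<equiv> vecm (- (X * E ^\<^sub>m k))"
abbreviation solves where "solves A \<equiv> is_solution k n m (span_L n r S) X E A"
abbreviation coeffs where "coeffs z \<equiv> coeffs_of_stack k n r S z"

lemma U_carrier: "U \<in> carrier_mat (m * n) (k * r)"
  by (rule Umat_carrier)

lemma b_carrier: "b \<in> carrier_vec (m * n)"
  using vecm_carrier[of "- (X * E ^\<^sub>m k)" n m] X E by (simp add: mult.commute)

lemma solves_iff_stack:
  "solves A \<longleftrightarrow> (\<exists>z \<in> carrier_vec (k * r). U *\<^sub>v z = b \<and> (\<forall>i<k. A i = coeffs z i))"
proof -
  have S: "\<forall>l\<in>{1..r}. S l \<in> carrier_mat n n" using basis unfolding is_basis_def by blast
  have stack_solves: "U *\<^sub>v z = b \<longleftrightarrow> msum n m k (\<lambda>i. coeffs z i * X * E ^\<^sub>m i) = - (X * E ^\<^sub>m k)"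
    if z: "z \<in> carrier_vec (k * r)" for z
    unfolding Umat_mult_vec[OF S X E z] using X E by (intro vecm_inject[of _ n m]) (auto simp: msum_def)
  have msum_cong: "msum n m k (\<lambda>i. A i * X * E ^\<^sub>m i) = msum n m k (\<lambda>i. B i * X * E ^\<^sub>m i)"
    if "\<forall>i<k. A i = B i" for B
    using that unfolding msum_def by (intro arg_cong[where f = "mat n m"] ext sum.cong) auto
  show ?thesis
  proof
    assume sol: "solves A"
    then obtain z where z: "z \<in> carrier_vec (k * r)" and A: "\<forall>i<k. A i = coeffs z i"
      using span_L_tuple_eq_coeffs_of_stack[of k A] unfolding is_solution_def by blast
    thus "\<exists>z \<in> carrier_vec (k * r). U *\<^sub>v z = b \<and> (\<forall>i<k. A i = coeffs z i)"
      using sol msum_cong[OF A] stack_solves[OF z] unfolding is_solution_def by auto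
  next
    assume "\<exists>z \<in> carrier_vec (k * r). U *\<^sub>v z = b \<and> (\<forall>i<k. A i = coeffs z i)"
    then obtain z where z: "z \<in> carrier_vec (k * r)" and "U *\<^sub>v z = b" and A: "\<forall>i<k. A i = coeffs z i"
      by blast
    thus "solves A"
      using msum_cong[OF A] stack_solves[OF z] unfolding is_solution_def
      by (simp add: coeffs_of_stack_in_span_L)
  qed
qed

lemma ex_solves_iff: "(\<exists>A. solves A) \<longleftrightarrow> U * G *\<^sub>v b = b"
proof -
  have "(\<exists>A. solves A) \<longleftrightarrow> (\<exists>z \<in> carrier_vec (k * r). U *\<^sub>v z = b)"
    unfolding solves_iff_stack by blast
  thus ?thesis using generalized_inverse_solvable_iff[OF U_carrier G generalized_inverse b_carrier] by simp
qed

lemma vecm_eq_iff_coeffs: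
  assumes z: "z \<in> carrier_vec (k * r)"
  shows "(\<forall>i<k. A i \<in> carrier_mat n n) \<and>
      (\<forall>i<k. vecm (A i) = Pmat n r S *\<^sub>v (kron (unit_row k (k - i)) (1\<^sub>m r) *\<^sub>v z))
    \<longleftrightarrow> (\<forall>i<k. A i = coeffs z i)"
proof -
  have "\<forall>l\<in>{1..r}. S l \<in> carrier_mat n n" using basis unfolding is_basis_def by blast
  note iff = vecm_eq_Pmat_kron_unit_row_iff[OF this _ _ z]
  show ?thesis
  proof
    assume H: "(\<forall>i<k. A i \<in> carrier_mat n n) \<and>
      (\<forall>i<k. vecm (A i) = Pmat n r S *\<^sub>v (kron (unit_row k (k - i)) (1\<^sub>m r) *\<^sub>v z))"
    show "\<forall>i<k. A i = coeffs z i"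
    proof (intro allI impI)
      fix i assume i: "i < k"
      hence "A i \<in> carrier_mat n n"
        and "vecm (A i) = Pmat n r S *\<^sub>v (kron (unit_row k (k - i)) (1\<^sub>m r) *\<^sub>v z)"
        using H by auto
      thus "A i = coeffs z i" using iff i by blast
    qed
  next
    assume "\<forall>i<k. A i = coeffs z i"
    thus "(\<forall>i<k. A i \<in> carrier_mat n n) \<and>
      (\<forall>i<k. vecm (A i) = Pmat n r S *\<^sub>v (kron (unit_row k (k - i)) (1\<^sub>m r) *\<^sub>v z))"
      using iff[OF coeffs_of_stack_carrier] by simp
  qed
qed

lemma solves_iff_parametrization:
  assumes consistent: "U * G *\<^sub>v b = b"
  shows "solves A \<longleftrightarrow> (\<forall>i<k. A i \<in> carrier_mat n n) \<and>
    (\<exists>y \<in> carrier_vec (k * r). \<forall>i<k. vecm (A i) = Pmat n r S *\<^sub>v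
      (kron (unit_row k (k - i)) (1\<^sub>m r) *\<^sub>v (G *\<^sub>v b + (1\<^sub>m (k * r) - G * U) *\<^sub>v y)))"
proof -
  note solutions = generalized_inverse_solutions[OF U_carrier G generalized_inverse b_carrier consistent]
  have "solves A \<longleftrightarrow>
      (\<exists>y \<in> carrier_vec (k * r). \<forall>i<k. A i = coeffs (G *\<^sub>v b + (1\<^sub>m (k * r) - G * U) *\<^sub>v y) i)"
    unfolding solves_iff_stack
  proof
    assume "\<exists>z \<in> carrier_vec (k * r). U *\<^sub>v z = b \<and> (\<forall>i<k. A i = coeffs z i)"
    then obtain z where "z \<in> carrier_vec (k * r)" "U *\<^sub>v z = b" and A: "\<forall>i<k. A i = coeffs z i"
      by blast
    moreover from solutions[of z] this obtain y where "y \<in> carrier_vec (k * r)"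
      and "z = G *\<^sub>v b + (1\<^sub>m (k * r) - G * U) *\<^sub>v y" by blast
    ultimately show "\<exists>y \<in> carrier_vec (k * r).
      \<forall>i<k. A i = coeffs (G *\<^sub>v b + (1\<^sub>m (k * r) - G * U) *\<^sub>v y) i" by blast
  next
    assume "\<exists>y \<in> carrier_vec (k * r).
      \<forall>i<k. A i = coeffs (G *\<^sub>v b + (1\<^sub>m (k * r) - G * U) *\<^sub>v y) i"
    thus "\<exists>z \<in> carrier_vec (k * r). U *\<^sub>v z = b \<and> (\<forall>i<k. A i = coeffs z i)"
      using solutions by blast
  qed
  also have "\<dots> \<longleftrightarrow> (\<exists>y \<in> carrier_vec (k * r). (\<forall>i<k. A i \<in> carrier_mat n n) \<and>
      (\<forall>i<k. vecm (A i) = Pmat n r S *\<^sub>v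
        (kron (unit_row k (k - i)) (1\<^sub>m r) *\<^sub>v (G *\<^sub>v b + (1\<^sub>m (k * r) - G * U) *\<^sub>v y))))"
  proof (rule bex_cong[OF refl])
    fix y :: "real vec" assume "y \<in> carrier_vec (k * r)"
    hence "G *\<^sub>v b + (1\<^sub>m (k * r) - G * U) *\<^sub>v y \<in> carrier_vec (k * r)" using solutions by blast
    thus "(\<forall>i<k. A i = coeffs (G *\<^sub>v b + (1\<^sub>m (k * r) - G * U) *\<^sub>v y) i) \<longleftrightarrow>
      (\<forall>i<k. A i \<in> carrier_mat n n) \<and> (\<forall>i<k. vecm (A i) = Pmat n r S *\<^sub>v
        (kron (unit_row k (k - i)) (1\<^sub>m r) *\<^sub>v (G *\<^sub>v b + (1\<^sub>m (k * r) - G * U) *\<^sub>v y)))"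
      by (rule vecm_eq_iff_coeffs[symmetric])
  qed
  finally show ?thesis by blast
qed

lemma unique_solves_iff:
  "((\<exists>A. solves A) \<and> (\<forall>A B. solves A \<longrightarrow> solves B \<longrightarrow> (\<forall>i<k. A i = B i)))
    \<longleftrightarrow> U * G *\<^sub>v b = b \<and> G * U = 1\<^sub>m (k * r)"
proof -
  have "(\<forall>A B. solves A \<longrightarrow> solves B \<longrightarrow> (\<forall>i<k. A i = B i)) \<longleftrightarrow>
    (\<forall>z \<in> carrier_vec (k * r). \<forall>z' \<in> carrier_vec (k * r). U *\<^sub>v z = b \<longrightarrow> U *\<^sub>v z' = b \<longrightarrow> z = z')"
  proof
    assume unique: "\<forall>A B. solves A \<longrightarrow> solves B \<longrightarrow> (\<forall>i<k. A i = B i)"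
    show "\<forall>z \<in> carrier_vec (k * r). \<forall>z' \<in> carrier_vec (k * r). U *\<^sub>v z = b \<longrightarrow> U *\<^sub>v z' = b \<longrightarrow> z = z'"
    proof (intro ballI impI)
      fix z z' assume z: "z \<in> carrier_vec (k * r)" and z': "z' \<in> carrier_vec (k * r)"
        and "U *\<^sub>v z = b" and "U *\<^sub>v z' = b"
      hence "solves (coeffs z)" and "solves (coeffs z')" unfolding solves_iff_stack by blast+
      thus "z = z'" using unique coeffs_of_stack_inject[OF basis z z'] by blast
    qed
  next
    assume "\<forall>z \<in> carrier_vec (k * r). \<forall>z' \<in> carrier_vec (k * r). U *\<^sub>v z = b \<longrightarrow> U *\<^sub>v z' = b \<longrightarrow> z = z'"
    note unique = this
    show "\<forall>A B. solves A \<longrightarrow> solves B \<longrightarrow> (\<forall>i<k. A i = B i)"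
    proof (intro allI impI)
      fix A B i assume "solves A" and "solves B" and i: "i < k"
      then obtain z z' where "z \<in> carrier_vec (k * r)" "U *\<^sub>v z = b" "\<forall>i<k. A i = coeffs z i"
        and "z' \<in> carrier_vec (k * r)" "U *\<^sub>v z' = b" "\<forall>i<k. B i = coeffs z' i"
        unfolding solves_iff_stack by blast
      thus "A i = B i" using unique i by metis
    qed
  qed
  thus ?thesis
    using ex_solves_iff generalized_inverse_unique_solution_iff[OF U_carrier G generalized_inverse b_carrier] by blast
qed

lemma unique_solution_formula:
  assumes "G * U = 1\<^sub>m (k * r)" and "solves A"
  shows "\<forall>i<k. vecm (A i) = Pmat n r S *\<^sub>v (kron (unit_row k (k - i)) (1\<^sub>m r) *\<^sub>v (G *\<^sub>v b))"
proof -
  obtain z where z: "z \<in> carrier_vec (k * r)" and "U *\<^sub>v z = b" and A: "\<forall>i<k. A i = coeffs z i"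
    using assms(2) unfolding solves_iff_stack by blast
  hence "G *\<^sub>v b = G * U *\<^sub>v z" using assoc_mult_mat_vec[OF G U_carrier z] by simp
  hence "z = G *\<^sub>v b" using z assms(1) by simp
  thus ?thesis using vecm_eq_iff_coeffs[OF z, of A] A by simp
qed

end

theorem theorem2:
  fixes k n m r t :: nat
    and S :: "nat \<Rightarrow> real mat"
    and \<alpha> \<beta> e :: "nat \<Rightarrow> real"
    and u v \<phi> :: "nat \<Rightarrow> real vec"
  assumes "k \<ge> 1" "n \<ge> 1" "m \<ge> 1" "m \<le> k * n"
    and basis: "is_basis n r S"
    and t_le: "2 * t \<le> m"
    and beta_nz: "\<forall>j\<in>{1..t}. \<beta> j \<noteq> 0"
    and u_dim: "\<forall>j\<in>{1..t}. u j \<in> carrier_vec n"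
    and v_dim: "\<forall>j\<in>{1..t}. v j \<in> carrier_vec n"
    and phi_dim: "\<forall>j\<in>{2*t+1..m}. \<phi> j \<in> carrier_vec n"
  defines "L \<equiv> span_L n r S"
    and "P \<equiv> Pmat n r S"
    and "E \<equiv> realform_E m t \<alpha> \<beta> e"
    and "X \<equiv> realform_X n m t u v \<phi>"
    and "U \<equiv> Umat k n m r (Pmat n r S) (realform_X n m t u v \<phi>) (realform_E m t \<alpha> \<beta> e)"
    and "b \<equiv> vecm (- (realform_X n m t u v \<phi> * (realform_E m t \<alpha> \<beta> e ^\<^sub>m k)))"
  shows "((\<exists>A. is_solution k n m L X E A) \<longleftrightarrow> U * pinv U *\<^sub>v b = b)
    \<and> (U * pinv U *\<^sub>v b = b \<longrightarrow>
         (\<forall>A. is_solution k n m L X E A \<longleftrightarrow>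
              ((\<forall>i<k. A i \<in> carrier_mat n n) \<and>
               (\<exists>y \<in> carrier_vec (k * r). \<forall>i<k.
                  vecm (A i) = P *\<^sub>v (kron (unit_row k (k - i)) (1\<^sub>m r) *\<^sub>v
                     (pinv U *\<^sub>v b + (1\<^sub>m (k * r) - pinv U * U) *\<^sub>v y))))))
    \<and> (((\<exists>A. is_solution k n m L X E A) \<and>
         (\<forall>A B. is_solution k n m L X E A \<longrightarrow> is_solution k n m L X E B \<longrightarrow> (\<forall>i<k. A i = B i)))
        \<longleftrightarrow> (U * pinv U *\<^sub>v b = b \<and> pinv U * U = 1\<^sub>m (k * r)))
    \<and> (U * pinv U *\<^sub>v b = b \<and> pinv U * U = 1\<^sub>m (k * r) \<longrightarrow>
         (\<forall>A. is_solution k n m L X E A \<longrightarrow>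
              (\<forall>i<k. vecm (A i) = P *\<^sub>v (kron (unit_row k (k - i)) (1\<^sub>m r) *\<^sub>v (pinv U *\<^sub>v b)))))"
proof -
  have X: "X \<in> carrier_mat n m" and E: "E \<in> carrier_mat m m"
    unfolding X_def realform_X_def E_def realform_E_def by simp_all
  have U_eq: "U = Umat k n m r (Pmat n r S) X E" and b_eq: "b = vecm (- (X * E ^\<^sub>m k))"
    unfolding U_def b_def X_def E_def by (rule refl)+
  interpret sys: eigenpair_linear_system k n m r S X E "pinv U"
    using basis X E is_pinv_pinv[of U] Umat_carrier[of k n m r "Pmat n r S" X E]
    unfolding is_pinv_def U_eq by unfold_locales auto
  note ex_solves_iff = sys.ex_solves_iff[folded U_eq b_eq L_def]
    and solves_iff = sys.solves_iff_parametrization[folded U_eq b_eq L_def P_def]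
    and unique_iff = sys.unique_solves_iff[folded U_eq b_eq L_def]
    and unique_formula = sys.unique_solution_formula[folded U_eq b_eq L_def P_def]
  show ?thesis
    by (intro conjI impI allI ex_solves_iff unique_iff solves_iff) (use unique_formula in auto)
qed

end
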